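(* Let $p\in(0,1/2]$, $b=\lfloor 1/p\rfloor$ (so $b\ge2$), and $m\ge1$ an integer. Let $D_U,D_V$ be integers with $m\le D_U\le bm$, $0\le D_V\le bm$, such that $D_U-m$ is an integer multiple of $b-1$ and $D_V$ is an integer multiple of $b$. Consider $$\Phi(x,y)=\sum_{i=1}^m\bigl(1-e^{-p\,y_i}\bigr)\cdot\max\{x_i-1,0\}$$ over integer vectors $x,y\in\{0,1,\dots,b\}^m$ with $\sum_i x_i=D_U$ and $\sum_i y_i=D_V$. Then $\Phi$ has a minimizer $(x^\star,y^\star)$ over this set in which every $x^\star_i\in\{1,b\}$ and every $y^\star_i\in\{0,b\}$. *)

theory Defs
  imports Complex_Main
begin

text \<open>Vectors in {0..b}^m are represented as functions nat \<Rightarrow> int, with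
  coordinates indexed by i < m (0-based) and value 0 outside.\<close>

definition Phi :: "real \<Rightarrow> nat \<Rightarrow> (nat \<Rightarrow> int) \<Rightarrow> (nat \<Rightarrow> int) \<Rightarrow> real" where
  "Phi p m x y = (\<Sum>i<m. (1 - exp (- p * real_of_int (y i))) * max (real_of_int (x i) - 1) 0)"

definition feasible :: "nat \<Rightarrow> int \<Rightarrow> int \<Rightarrow> int \<Rightarrow> (nat \<Rightarrow> int) \<Rightarrow> (nat \<Rightarrow> int) \<Rightarrow> bool" where
  "feasible m b DU DV x y \<longleftrightarrow>
     (\<forall>i<m. 0 \<le> x i \<and> x i \<le> b \<and> 0 \<le> y i \<and> y i \<le> b) \<and>
     (\<forall>i\<ge>m. x i = 0 \<and> y i = 0) \<and>
     (\<Sum>i<m. x i) = DU \<and> (\<Sum>i<m. y i) = DV"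

end

theory Submission
  imports Defs "HOL-Analysis.Analysis"
begin

text \<open>
  Write \<open>c = 1 - exp (-p b)\<close> and \<open>u = max (x - 1) 0\<close>. On \<open>[0, b]\<close> the concave function
  \<open>y \<mapsto> 1 - exp (-p y)\<close> lies above its chord \<open>c y / b\<close>, and \<open>(b - y) (b - 1 - u) \<ge> 0\<close> bounds the
  product \<open>y u\<close> from below by a linear function. Hence every summand of \<open>\<Phi>\<close> is at least an
  affine function of \<open>(x\<^sub>i, y\<^sub>i)\<close>, and summing gives a lower bound for \<open>\<Phi>\<close> that depends only on
  \<open>D\<^sub>U\<close> and \<open>D\<^sub>V\<close>. With \<open>D\<^sub>U = m + (b - 1) K\<close> and \<open>D\<^sub>V = b L\<close> this bound is \<open>c (b - 1) (K + L - m)\<close>.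
  Putting \<open>x\<^sub>i = b\<close> on the first \<open>K\<close> coordinates and \<open>y\<^sub>i = b\<close> on the last \<open>L\<close>, so that the two
  blocks overlap as little as possible, attains the larger of this bound and the trivial bound 0.
\<close>

lemma one_minus_exp_chord:
  fixes p b y :: real
  assumes "0 < b" "0 \<le> y" "y \<le> b"
  shows "y / b * (1 - exp (- p * b)) \<le> 1 - exp (- p * y)"
proof -
  define t where "t = y / b"
  have t: "0 \<le> t" "t \<le> 1" using assms by (auto simp: t_def)
  have "exp ((1 - t) *\<^sub>R 0 + t *\<^sub>R (- p * b)) \<le> (1 - t) * exp 0 + t * exp (- p * b)"
    using convex_onD[OF exp_convex, of t 0 "- p * b"] t by simp
  moreover have "(1 - t) *\<^sub>R 0 + t *\<^sub>R (- p * b) = - p * y"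
    using assms by (simp add: t_def)
  ultimately have "exp (- p * y) \<le> (1 - t) + t * exp (- p * b)"
    by (metis exp_zero mult_1_right)
  then show ?thesis by (simp add: t_def[symmetric] algebra_simps)
qed

lemma Phi_summand_lower_bound:
  fixes p b x y :: real
  assumes "0 \<le> p" "1 \<le> b" "x \<le> b" "0 \<le> y" "y \<le> b"
  shows "(1 - exp (- p * b)) / b * ((b - 1) * y + b * (x - 1) - b * (b - 1))
         \<le> (1 - exp (- p * y)) * max (x - 1) 0"
proof -
  define c where "c = 1 - exp (- p * b)"
  define u where "u = max (x - 1) 0"
  have c: "0 \<le> c" using assms by (simp add: c_def)
  have u: "0 \<le> u" "u \<le> b - 1" "x - 1 \<le> u" using assms by (auto simp: u_def)
  have "(b - y) * (b - 1 - u) \<ge> 0"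
    using assms u by (intro mult_nonneg_nonneg) auto
  then have "(b - 1) * y + b * u - b * (b - 1) \<le> y * u" by (simp add: algebra_simps)
  moreover have "b * (x - 1) \<le> b * u" using u assms by (intro mult_left_mono) auto
  ultimately have "(b - 1) * y + b * (x - 1) - b * (b - 1) \<le> y * u" by linarith
  then have "c / b * ((b - 1) * y + b * (x - 1) - b * (b - 1)) \<le> c / b * (y * u)"
    using c assms by (intro mult_left_mono) auto
  also have "\<dots> = (y / b * c) * u" by simp
  also have "\<dots> \<le> (1 - exp (- p * y)) * u"
    using one_minus_exp_chord[of b y p] assms u by (intro mult_right_mono) (auto simp: c_def)
  finally show ?thesis by (simp add: c_def u_def)
qed

lemma Phi_nonneg:
  assumes "0 \<le> p" "\<forall>i<m. 0 \<le> y i"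
  shows "0 \<le> Phi p m x y"
  unfolding Phi_def using assms by (intro sum_nonneg mult_nonneg_nonneg) auto

lemma Phi_lower_bound:
  assumes "0 \<le> p" "1 \<le> b" "feasible m b DU DV x y"
  shows "(1 - exp (- p * b)) / b * ((b - 1) * DV + b * (DU - int m) - int m * b * (b - 1))
         \<le> Phi p m x y"
proof -
  have bounds: "\<forall>i<m. x i \<le> b \<and> 0 \<le> y i \<and> y i \<le> b"
    and sums: "(\<Sum>i<m. x i) = DU" "(\<Sum>i<m. y i) = DV"
    using assms(3) by (auto simp: feasible_def)
  have "(b - 1) * DV + b * (DU - int m) - int m * b * (b - 1)
        = (\<Sum>i<m. (b - 1) * y i + b * (x i - 1) - b * (b - 1))"
    by (simp add: sums[symmetric] sum.distrib sum_subtractf sum_distrib_left algebra_simps)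
  then have "real_of_int ((b - 1) * DV + b * (DU - int m) - int m * b * (b - 1))
        = (\<Sum>i<m. (b - 1) * y i + b * (real_of_int (x i) - 1) - b * (b - 1))"
    by (simp add: of_int_sum)
  then have "(1 - exp (- p * b)) / b * ((b - 1) * DV + b * (DU - int m) - int m * b * (b - 1))
        = (\<Sum>i<m. (1 - exp (- p * b)) / b *
             ((b - 1) * y i + b * (real_of_int (x i) - 1) - b * (b - 1)))"
    by (simp only: sum_distrib_left)
  also have "\<dots> \<le> Phi p m x y"
    unfolding Phi_def
    using Phi_summand_lower_bound[of p "real_of_int b" "real_of_int (x _)" "real_of_int (y _)"]
      assms bounds
    by (intro sum_mono) auto
  finally show ?thesis .
qed

definition block_x :: "nat \<Rightarrow> int \<Rightarrow> nat \<Rightarrow> nat \<Rightarrow> int" where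
  "block_x m b K i = (if i < m then if i < K then b else 1 else 0)"

definition block_y :: "nat \<Rightarrow> int \<Rightarrow> nat \<Rightarrow> nat \<Rightarrow> int" where
  "block_y m b L i = (if m - L \<le> i \<and> i < m then b else 0)"

lemma sum_lessThan_block:
  fixes a c :: "'a::comm_ring_1"
  assumes "K \<le> m"
  shows "(\<Sum>i<m. if i < K then a else c) = of_nat K * a + of_nat (m - K) * c"
proof -
  have "{..<m} = {..<K} \<union> {K..<m}" using assms by auto
  then have "(\<Sum>i<m. if i < K then a else c)
        = (\<Sum>i<K. if i < K then a else c) + (\<Sum>i\<in>{K..<m}. if i < K then a else c)"
    by (simp add: sum.union_disjoint ivl_disj_int_one(2))
  then show ?thesis by simp
qed

lemma feasible_block:
  assumes "1 \<le> b" "K \<le> m" "L \<le> m"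
  shows "feasible m b (int m + (b - 1) * int K) (b * int L) (block_x m b K) (block_y m b L)"
proof -
  have "(\<Sum>i<m. block_x m b K i) = (\<Sum>i<m. if i < K then b else 1)"
    using assms by (intro sum.cong) (auto simp: block_x_def)
  also have "\<dots> = int m + (b - 1) * int K"
    using assms by (simp add: sum_lessThan_block of_nat_diff algebra_simps)
  finally have sx: "(\<Sum>i<m. block_x m b K i) = int m + (b - 1) * int K" .
  have "(\<Sum>i<m. block_y m b L i) = (\<Sum>i<m. if i < m - L then 0 else b)"
    by (intro sum.cong) (auto simp: block_y_def)
  also have "\<dots> = b * int L"
    using assms by (simp add: sum_lessThan_block)
  finally have sy: "(\<Sum>i<m. block_y m b L i) = b * int L" .
  show ?thesis
    unfolding feasible_def using assms sx sy by (auto simp: block_x_def block_y_def)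
qed

lemma Phi_block:
  assumes "1 \<le> b" "K \<le> m" "L \<le> m"
  shows "Phi p m (block_x m b K) (block_y m b L)
         = (1 - exp (- p * b)) * (b - 1) * real (K + L - m)"
proof -
  have "Phi p m (block_x m b K) (block_y m b L)
        = (\<Sum>i\<in>{m - L..<K}. (1 - exp (- p * b)) * (b - 1))"
    unfolding Phi_def using assms
    by (intro sum.mono_neutral_cong_right) (auto simp: block_x_def block_y_def)
  then show ?thesis using assms by simp
qed

theorem mainTheorem9:
  fixes p :: real and m :: nat and b DU DV :: int
  assumes "0 < p" and "p \<le> 1/2"
    and "b = \<lfloor>1 / p\<rfloor>"
    and "m \<ge> 1"
    and "int m \<le> DU" and "DU \<le> b * int m"
    and "0 \<le> DV" and "DV \<le> b * int m"
    and "(b - 1) dvd (DU - int m)"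
    and "b dvd DV"
  shows "\<exists>xs ys. feasible m b DU DV xs ys \<and>
           (\<forall>x y. feasible m b DU DV x y \<longrightarrow> Phi p m xs ys \<le> Phi p m x y) \<and>
           (\<forall>i<m. xs i \<in> {1, b} \<and> ys i \<in> {0, b})"
proof -
  have "2 \<le> 1 / p" using assms(1,2) by (simp add: field_simps)
  then have b: "2 \<le> b" using assms(3) by (simp add: le_floor_iff)
  obtain k where "DU - int m = (b - 1) * k" using assms(9) by (auto simp: dvd_def)
  then have k: "DU = int m + (b - 1) * k" by simp
  obtain l where l: "DV = b * l" using assms(10) by (auto simp: dvd_def)
  have "(b - 1) * k \<le> (b - 1) * int m" using assms(6) k by (simp add: algebra_simps)
  then have "0 \<le> k" "k \<le> int m" "0 \<le> l" "l \<le> int m"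
    using assms(5-8) b by (auto simp: k l zero_le_mult_iff)
  then obtain K L where KL: "K \<le> m" "L \<le> m" "DU = int m + (b - 1) * int K" "DV = b * int L"
    using k l by (metis nat_0_le nat_le_iff)
  let ?xs = "block_x m b K" and ?ys = "block_y m b L"
  have minimal: "Phi p m ?xs ?ys \<le> Phi p m x y" if xy: "feasible m b DU DV x y" for x y
  proof (cases "m \<le> K + L")
    case True
    have "(b - 1) * DV + b * (DU - int m) - int m * b * (b - 1) = b * (b - 1) * int (K + L - m)"
      unfolding KL(3,4) using KL(1,2) True by (simp add: of_nat_diff algebra_simps)
    then have "Phi p m ?xs ?ys
        = (1 - exp (- p * b)) / b * ((b - 1) * DV + b * (DU - int m) - int m * b * (b - 1))"
      using b KL by (simp add: Phi_block)
    also have "\<dots> \<le> Phi p m x y" using Phi_lower_bound[OF _ _ xy] assms(1) b by simp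
    finally show ?thesis .
  next
    case False
    then show ?thesis
      using Phi_block[of b K m L p] Phi_nonneg[of p m y x] xy assms(1) b KL
      by (simp add: feasible_def)
  qed
  show ?thesis
    using feasible_block[of b K m L] KL b minimal
    by (intro exI[of _ ?xs] exI[of _ ?ys]) (auto simp: block_x_def block_y_def)
qed

end
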